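(* Fix $n\in\mathbb{Z}_+$ and $a_1,\ldots,a_{n+1}\in(0,\infty)$. Then there is a constant $c>0$ (depending on $a_1,\ldots,a_{n+1}$) and an unbounded open set $B$ of positive real numbers with the following property: for each $\beta\in B$ there are $p_1,\ldots,p_n\in\mathbb{Z}$ such that, for each $j\in\{1,\ldots,n\}$, \[0<p_j\frac{a_j}{a_{n+1}}-\beta<\begin{cases}c\beta^{-2}&\text{if }n=1,\\ c\beta^{-1/(n-1)}&\text{if }n\geq2.\end{cases}\] *)

theory Defs
  imports "HOL-Analysis.Analysis"
begin

end

theory Submission
  imports Defs
begin

(* Write b j = a j / a (n + 1). For n = 1 it suffices to take \<beta> slightly below a large multiple
   of b 1. For n \<ge> 2, Dirichlet's simultaneous approximation of the n - 1 ratios b 1 / b j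
   (2 \<le> j \<le> n) yields arbitrarily large q and integers p j with
   |p j * b j - q * b 1| \<le> b j * q powr (-1 / (n - 1)); lowering q * b 1 by twice the largest
   error gives a \<beta> lying below all the multiples p j * b j (and q * b 1 itself) by less than
   c * \<beta> powr (-1 / (n - 1)). For each fixed choice of multiples the admissible \<beta> form an
   open set, so their union B is open. *)

definition common_lower_approx :: "(nat \<Rightarrow> real) \<Rightarrow> nat set \<Rightarrow> (real \<Rightarrow> real) \<Rightarrow> real set" where
  "common_lower_approx b J w = {\<beta>. 0 < \<beta> \<and> (\<exists>p :: nat \<Rightarrow> int. \<forall>j\<in>J.
     0 < of_int (p j) * b j - \<beta> \<and> of_int (p j) * b j - \<beta> < w \<beta>)}"

lemma open_Collect_less_on:
  fixes f g :: "'a::topological_space \<Rightarrow> real"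
  assumes "open S" "continuous_on S f" "continuous_on S g"
  shows "open {x\<in>S. f x < g x}"
  by (metis assms open_Collect_less_Int open_Int)

lemma open_Collect_finite_Ball:
  assumes "open S" "finite J" "\<And>j. j \<in> J \<Longrightarrow> open {x\<in>S. P j x}"
  shows "open {x\<in>S. \<forall>j\<in>J. P j x}"
proof -
  have "{x\<in>S. \<forall>j\<in>J. P j x} = S \<inter> (\<Inter>j\<in>J. {x\<in>S. P j x})"
    by auto
  then show ?thesis
    using assms by (simp add: open_INT open_Int)
qed

lemma open_common_lower_approx:
  assumes "finite J" "continuous_on {0<..} w"
  shows "open (common_lower_approx b J w)"
proof -
  have "open {\<beta>\<in>{0<..}. 0 < y - \<beta> \<and> y - \<beta> < w \<beta>}" for y
  proof -
    have "continuous_on {0<..} (\<lambda>\<beta>. y - \<beta>)"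
      by (intro continuous_intros)
    then have "open {\<beta>\<in>{0<..}. y - \<beta> < w \<beta>}"
      using assms(2) by (intro open_Collect_less_on) auto
    moreover have "{\<beta>\<in>{0<..}. 0 < y - \<beta> \<and> y - \<beta> < w \<beta>} = {0<..<y} \<inter> {\<beta>\<in>{0<..}. y - \<beta> < w \<beta>}"
      by auto
    ultimately show ?thesis
      by (simp add: open_Int)
  qed
  then have "open {\<beta>\<in>{0<..}. \<forall>j\<in>J. 0 < of_int (p j) * b j - \<beta> \<and> of_int (p j) * b j - \<beta> < w \<beta>}"
    for p :: "nat \<Rightarrow> int"
    using assms(1) by (intro open_Collect_finite_Ball) auto
  moreover have "common_lower_approx b J w = (\<Union>p. {\<beta>\<in>{0<..}. \<forall>j\<in>J.
      0 < of_int (p j) * b j - \<beta> \<and> of_int (p j) * b j - \<beta> < w \<beta>})"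
    by (auto simp: common_lower_approx_def)
  ultimately show ?thesis
    by (simp add: open_UN)
qed

lemma not_bdd_aboveI:
  fixes S :: "'a::linorder set"
  assumes "\<And>M. \<exists>x\<in>S. M < x"
  shows "\<not> bdd_above S"
  by (meson assms bdd_above_def not_le)

lemma finite_set_uniformly_far_from_Ints:
  fixes S :: "real set"
  assumes "finite S" "S \<inter> \<int> = {}"
  obtains \<eta> where "\<eta> > 0" "\<And>x p. x \<in> S \<Longrightarrow> \<eta> \<le> \<bar>x - of_int p\<bar>"
proof
  define \<eta> where "\<eta> = Min (insert 1 ((\<lambda>x. infdist x \<int>) ` S))"
  have "infdist x \<int> > 0" if "x \<in> S" for x
    using assms(2) that by (intro infdist_pos_not_in_closed) auto
  then show "\<eta> > 0"
    using assms(1) by (simp add: \<eta>_def)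
  fix x p assume "x \<in> S"
  then have "\<eta> \<le> infdist x \<int>"
    using assms(1) by (simp add: \<eta>_def)
  also have "\<dots> \<le> dist x (of_int p)"
    by (intro infdist_le) simp
  finally show "\<eta> \<le> \<bar>x - of_int p\<bar>"
    by (simp add: dist_real_def)
qed

lemma inverse_le_powr_of_le_power:
  fixes x y :: real
  assumes "0 < x" "0 < y" "x \<le> y ^ m" "m > 0"
  shows "1 / y \<le> x powr (-1 / m)"
proof -
  have "x powr (1 / m) \<le> (y ^ m) powr (1 / m)"
    using assms by (intro powr_mono2) auto
  also have "\<dots> = y"
    using assms by (simp add: powr_realpow[symmetric] powr_powr)
  finally have "x powr (1 / m) \<le> y" .
  then show ?thesis
    using assms by (simp add: powr_minus_divide divide_simps)
qed

lemma Dirichlet_approx_simult_large: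
  fixes \<theta> :: "nat \<Rightarrow> real" and M :: real and m :: nat
  assumes "m > 0"
  obtains q :: int and p :: "nat \<Rightarrow> int"
  where "q > M" "q > 0" "\<And>i. i < m \<Longrightarrow> \<bar>of_int q * \<theta> i - of_int (p i)\<bar> \<le> of_int q powr (-1 / m)"
proof -
  \<comment> \<open>Either some q \<le> M makes every q * \<theta> i an integer, and its multiples work, or the
    finitely many q \<le> M stay uniformly away from integers, and a fine enough Dirichlet
    approximation must use some q > M.\<close>
  consider (integral) q\<^sub>0 :: int where "q\<^sub>0 \<in> {1..\<lfloor>M\<rfloor>}" "\<And>i. i < m \<Longrightarrow> of_int q\<^sub>0 * \<theta> i \<in> \<int>"
    | (generic) "\<And>q. q \<in> {1..\<lfloor>M\<rfloor>} \<Longrightarrow> \<exists>i<m. of_int q * \<theta> i \<notin> \<int>"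
    by blast
  then show thesis
  proof cases
    case integral
    define q where "q = q\<^sub>0 * (\<lfloor>M\<rfloor> + 1)"
    have "\<lfloor>M\<rfloor> + 1 \<le> q"
      using integral(1) mult_right_mono[of 1 q\<^sub>0 "\<lfloor>M\<rfloor> + 1"] by (simp add: q_def)
    moreover have "1 \<le> \<lfloor>M\<rfloor>"
      using integral(1) by (metis atLeastAtMost_iff order_trans)
    ultimately have "q > M" "q > 0"
      by linarith+
    have "\<exists>k::int. of_int q * \<theta> i = of_int k" if "i < m" for i
    proof -
      have "of_int q * \<theta> i = of_int (\<lfloor>M\<rfloor> + 1) * (of_int q\<^sub>0 * \<theta> i)"
        by (simp add: q_def)
      also have "\<dots> \<in> \<int>"
        by (rule Ints_mult[OF Ints_of_int integral(2)[OF that]])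
      finally show ?thesis
        by (auto elim: Ints_cases)
    qed
    then obtain p :: "nat \<Rightarrow> int" where "\<And>i. i < m \<Longrightarrow> of_int q * \<theta> i = of_int (p i)"
      by metis
    with \<open>q > M\<close> \<open>q > 0\<close> show thesis
      by (intro that[of q p]) auto
  next
    case generic
    define S where "S = (\<lambda>(q, i). of_int q * \<theta> i) ` ({1..\<lfloor>M\<rfloor>} \<times> {..<m}) - \<int>"
    obtain \<eta> where "\<eta> > 0" and \<eta>: "\<And>x p. x \<in> S \<Longrightarrow> \<eta> \<le> \<bar>x - of_int p\<bar>"
      by (rule finite_set_uniformly_far_from_Ints[of S]) (auto simp: S_def)
    obtain N :: nat where "N > 0" "1 / N < \<eta>"
      using ex_inverse_of_nat_less[OF \<open>\<eta> > 0\<close>] by (auto simp: divide_inverse)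
    obtain q p where "0 < q" "q \<le> int (N ^ m)"
      and close: "\<And>i. i < m \<Longrightarrow> \<bar>of_int q * \<theta> i - of_int (p i)\<bar> < 1 / N"
      using Dirichlet_approx_simult[OF \<open>N > 0\<close>] by metis
    have "q > M"
    proof (rule ccontr)
      assume "\<not> q > M"
      then have "q \<in> {1..\<lfloor>M\<rfloor>}"
        using \<open>0 < q\<close> by (simp add: le_floor_iff)
      then obtain i where "i < m" "of_int q * \<theta> i \<notin> \<int>"
        using generic by blast
      then have "of_int q * \<theta> i \<in> S"
        using \<open>q \<in> {1..\<lfloor>M\<rfloor>}\<close> by (auto simp: S_def)
      then show False
        using \<eta> close[OF \<open>i < m\<close>] \<open>1 / N < \<eta>\<close> by (meson le_less_trans not_less_iff_gr_or_eq)
    qed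
    have "of_int q \<le> real N ^ m"
      using \<open>q \<le> int (N ^ m)\<close> by (metis of_int_le_iff of_int_of_nat_eq of_nat_power)
    then have "1 / N \<le> of_int q powr (-1 / m)"
      using \<open>0 < q\<close> \<open>N > 0\<close> assms by (intro inverse_le_powr_of_le_power) auto
    with \<open>q > M\<close> \<open>0 < q\<close> close show thesis
      by (intro that[of q p]) (auto intro: less_imp_le less_le_trans)
  qed
qed

lemma close_integer_multiples:
  fixes b :: "nat \<Rightarrow> real" and M :: real
  assumes "n \<ge> 2" "\<And>j. j \<in> {1..n} \<Longrightarrow> b j > 0"
  obtains q :: int and P :: "nat \<Rightarrow> int"
  where "q > M" "q > 0" "\<And>j. j \<in> {1..n} \<Longrightarrow>
    \<bar>of_int (P j) * b j - of_int q * b 1\<bar> \<le> b j * of_int q powr (-1 / (real n - 1))"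
proof -
  obtain q p where "q > M" "q > 0" and close:
    "\<And>i. i < n - 1 \<Longrightarrow> \<bar>of_int q * (b 1 / b (i + 2)) - of_int (p i)\<bar> \<le> of_int q powr (-1 / real (n - 1))"
    using Dirichlet_approx_simult_large[of "n - 1" M "\<lambda>i. b 1 / b (i + 2)"] assms(1) by auto
  define P where "P j = (if j = 1 then q else p (j - 2))" for j
  have "\<bar>of_int (P j) * b j - of_int q * b 1\<bar> \<le> b j * of_int q powr (-1 / (real n - 1))"
    if j: "j \<in> {1..n}" for j
  proof (cases "j = 1")
    case True
    then show ?thesis
      using assms(2)[OF j] by (simp add: P_def)
  next
    case False
    with j have "j - 2 < n - 1" "j - 2 + 2 = j"
      by auto
    have "b j > 0"
      using assms(2)[OF j] .
    have "\<bar>of_int (P j) * b j - of_int q * b 1\<bar> = b j * \<bar>of_int q * (b 1 / b j) - of_int (p (j - 2))\<bar>"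
      using False \<open>b j > 0\<close> by (simp add: P_def abs_mult abs_minus_commute field_simps)
    also have "\<dots> \<le> b j * of_int q powr (-1 / (real n - 1))"
      using close[OF \<open>j - 2 < n - 1\<close>] \<open>b j > 0\<close> \<open>j - 2 + 2 = j\<close> assms(1)
      by (intro mult_left_mono) (auto simp: of_nat_diff)
    finally show ?thesis .
  qed
  with \<open>q > M\<close> \<open>q > 0\<close> show thesis
    using that by blast
qed

lemma not_bdd_above_common_lower_approx_single:
  assumes "b j > 0" "c > 0" "e \<le> 0"
  shows "\<not> bdd_above (common_lower_approx b {j} (\<lambda>\<beta>. c * \<beta> powr e))"
proof (rule not_bdd_aboveI)
  fix M :: real
  define p where "p = \<lceil>(\<bar>M\<bar> + 1) / b j\<rceil>"
  define t where "t = of_int p * b j"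
  have "t \<ge> \<bar>M\<bar> + 1"
    using assms(1) by (simp add: t_def p_def pos_divide_le_eq[symmetric])
  define \<epsilon> where "\<epsilon> = min (1 / 2) (c * t powr e / 2)"
  have "c * t powr e > 0"
    using assms(2) \<open>t \<ge> \<bar>M\<bar> + 1\<close> by simp
  then have "0 < \<epsilon>" "\<epsilon> \<le> 1 / 2" "\<epsilon> < c * t powr e"
    by (auto simp: \<epsilon>_def)
  define \<beta> where "\<beta> = t - \<epsilon>"
  have "\<beta> > \<bar>M\<bar>"
    using \<open>t \<ge> \<bar>M\<bar> + 1\<close> \<open>\<epsilon> \<le> 1 / 2\<close> by (simp add: \<beta>_def)
  have "c * t powr e \<le> c * \<beta> powr e"
    using assms \<open>\<beta> > \<bar>M\<bar>\<close> \<open>0 < \<epsilon>\<close> by (auto simp: \<beta>_def intro!: powr_mono2')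
  then have "\<beta> \<in> common_lower_approx b {j} (\<lambda>\<beta>. c * \<beta> powr e)"
    using \<open>\<beta> > \<bar>M\<bar>\<close> \<open>0 < \<epsilon>\<close> \<open>\<epsilon> < c * t powr e\<close>
    by (auto simp: common_lower_approx_def \<beta>_def t_def intro!: exI[of _ "\<lambda>_. p"])
  with \<open>\<beta> > \<bar>M\<bar>\<close> show "\<exists>\<beta>\<in>common_lower_approx b {j} (\<lambda>\<beta>. c * \<beta> powr e). M < \<beta>"
    by (intro bexI[of _ \<beta>]) auto
qed

lemma not_bdd_above_common_lower_approx_simult:
  fixes b :: "nat \<Rightarrow> real"
  assumes "n \<ge> 2" "\<And>j. j \<in> {1..n} \<Longrightarrow> b j > 0"
  shows "\<exists>c>0. \<not> bdd_above (common_lower_approx b {1..n} (\<lambda>\<beta>. c * \<beta> powr (-1 / (real n - 1))))"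
proof -
  define e where "e = -1 / (real n - 1)"
  define \<Sigma> where "\<Sigma> = (\<Sum>j\<in>{1..n}. b j)"
  define c where "c = 4 * \<Sigma> * b 1 powr (1 / (real n - 1))"
  have "b 1 > 0"
    using assms by auto
  have b_le_\<Sigma>: "b j \<le> \<Sigma>" if "j \<in> {1..n}" for j
    unfolding \<Sigma>_def using that assms(2) by (intro member_le_sum) (auto intro: less_imp_le)
  have "\<Sigma> > 0"
    using b_le_\<Sigma>[of 1] \<open>b 1 > 0\<close> assms(1) by fastforce
  have "e \<le> 0"
    using assms(1) by (simp add: e_def)
  have "c > 0"
    using \<open>\<Sigma> > 0\<close> \<open>b 1 > 0\<close> by (simp add: c_def)
  moreover have "\<exists>\<beta>\<in>common_lower_approx b {1..n} (\<lambda>\<beta>. c * \<beta> powr e). M < \<beta>" for M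
  proof -
    obtain q P where "q > (\<bar>M\<bar> + 2 * \<Sigma>) / b 1" "q > 0" and close:
      "\<And>j. j \<in> {1..n} \<Longrightarrow> \<bar>of_int (P j) * b j - of_int q * b 1\<bar> \<le> b j * of_int q powr e"
      using close_integer_multiples[of n b] assms unfolding e_def by metis
    define D where "D = \<Sigma> * of_int q powr e"
    have "of_int q powr e \<le> 1"
      using \<open>q > 0\<close> \<open>e \<le> 0\<close> powr_mono2'[of e 1 "of_int q"] by simp
    then have "0 < D" "D \<le> \<Sigma>"
      using \<open>\<Sigma> > 0\<close> \<open>q > 0\<close> by (auto simp: D_def mult_le_cancel_left1)
    have near: "\<bar>of_int (P j) * b j - of_int q * b 1\<bar> \<le> D" if "j \<in> {1..n}" for j
      using close[OF that] b_le_\<Sigma>[OF that] \<open>q > 0\<close>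
      unfolding D_def by (meson mult_right_mono order_trans powr_ge_zero)
    define \<beta> where "\<beta> = of_int q * b 1 - 2 * D"
    have "\<beta> > \<bar>M\<bar>"
      using \<open>q > (\<bar>M\<bar> + 2 * \<Sigma>) / b 1\<close> \<open>b 1 > 0\<close> \<open>D \<le> \<Sigma>\<close>
      by (simp add: \<beta>_def pos_divide_less_eq)
    have "4 * D = c * (of_int q * b 1) powr e"
      using \<open>q > 0\<close> \<open>b 1 > 0\<close>
      by (simp add: D_def c_def e_def powr_mult powr_add[symmetric] diff_divide_distrib)
    also have "\<dots> \<le> c * \<beta> powr e"
      using \<open>c > 0\<close> \<open>e \<le> 0\<close> \<open>\<beta> > \<bar>M\<bar>\<close> \<open>0 < D\<close>
      by (auto simp: \<beta>_def intro!: mult_left_mono powr_mono2')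
    finally have "0 < of_int (P j) * b j - \<beta> \<and> of_int (P j) * b j - \<beta> < c * \<beta> powr e"
      if "j \<in> {1..n}" for j
      using near[OF that] \<open>0 < D\<close> by (auto simp: \<beta>_def abs_le_iff)
    then have "\<beta> \<in> common_lower_approx b {1..n} (\<lambda>\<beta>. c * \<beta> powr e)"
      using \<open>\<beta> > \<bar>M\<bar>\<close> unfolding common_lower_approx_def by (auto intro!: exI[of _ P])
    with \<open>\<beta> > \<bar>M\<bar>\<close> show ?thesis
      by (intro bexI[of _ \<beta>]) auto
  qed
  ultimately show ?thesis
    unfolding e_def using not_bdd_aboveI by blast
qed

theorem lemma5p5:
  fixes n :: nat and a :: "nat \<Rightarrow> real"
  assumes "n \<ge> 1"
    and "\<And>j. j \<in> {1..n+1} \<Longrightarrow> a j > 0"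
  shows "\<exists>c > 0. \<exists>B :: real set. open B \<and> B \<subseteq> {0<..} \<and> \<not> bdd_above B \<and>
    (\<forall>\<beta>\<in>B. \<exists>p :: nat \<Rightarrow> int. \<forall>j\<in>{1..n}.
       0 < of_int (p j) * (a j / a (n+1)) - \<beta> \<and>
       of_int (p j) * (a j / a (n+1)) - \<beta> <
         (if n = 1 then c * \<beta> powr (-2) else c * \<beta> powr (- 1 / (real n - 1))))"
proof -
  define b where "b j = a j / a (n + 1)" for j
  define e :: real where "e = (if n = 1 then -2 else - 1 / (real n - 1))"
  define B where "B c = common_lower_approx b {1..n} (\<lambda>\<beta>. c * \<beta> powr e)" for c
  have bound_eq: "(if n = 1 then c * \<beta> powr (-2) else c * \<beta> powr (- 1 / (real n - 1)))
      = c * \<beta> powr e" for c \<beta> :: real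
    by (simp add: e_def)
  have b_pos: "b j > 0" if "j \<in> {1..n}" for j
    using assms(2)[of j] assms(2)[of "n + 1"] that by (simp add: b_def)
  obtain c where "c > 0" "\<not> bdd_above (B c)"
  proof (cases "n = 1")
    case True
    then show thesis
      using not_bdd_above_common_lower_approx_single[of b 1 1 e] b_pos[of 1] that[of 1]
      by (simp add: B_def e_def)
  next
    case False
    then show thesis
      using not_bdd_above_common_lower_approx_simult[of n b] b_pos assms(1) that
      by (auto simp: B_def e_def)
  qed
  moreover have "open (B c)"
    unfolding B_def by (intro open_common_lower_approx continuous_intros) auto
  moreover have "B c \<subseteq> {0<..}"
    by (auto simp: B_def common_lower_approx_def)
  moreover have "\<forall>\<beta>\<in>B c. \<exists>p :: nat \<Rightarrow> int. \<forall>j\<in>{1..n}.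
      0 < of_int (p j) * b j - \<beta> \<and> of_int (p j) * b j - \<beta> < c * \<beta> powr e"
    by (auto simp: B_def common_lower_approx_def)
  ultimately show ?thesis
    unfolding b_def[symmetric] bound_eq by (intro exI[of _ c] exI[of _ "B c"] conjI) auto
qed

end
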